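(* Let $\delta,\varepsilon\in[0,1)$, let $\mathscr{H},\mathscr{K}$ be complex inner product spaces and let $T:\mathscr{H}\to\mathscr{K}$ be a linear $(\delta,\varepsilon)$-orthogonality preserving mapping. If $\eta,\zeta\in\mathscr{H}\setminus\{0\}$ are orthogonal, then $$\sqrt{\frac{(1-\delta)(1-\varepsilon)}{(1+\delta)(1+\varepsilon)}}\,\|T\zeta\|\,\|\eta\|\leq\|T\eta\|\,\|\zeta\|\leq\sqrt{\frac{(1-\delta)(1+\varepsilon)}{(1+\delta)(1-\varepsilon)}}\,\|T\zeta\|\,\|\eta\|.$$
   Context: A mapping $T:\mathscr{H}\to\mathscr{K}$ between inner product spaces is $(\delta,\varepsilon)$-orthogonality preserving if for all $\eta,\zeta\in\mathscr{H}$, $|(\eta,\zeta)|\leq\delta\|\eta\|\,\|\zeta\|$ implies $|(T\eta,T\zeta)|\leq\varepsilon\|T\eta\|\,\|T\zeta\|$. *)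

theory Defs
  imports Complex_Main
begin

class complex_inner_space = ab_group_add +
  fixes cscale :: "complex \<Rightarrow> 'a \<Rightarrow> 'a" (infixr \<open>*\<^sub>C\<close> 75)
    and cinner :: "'a \<Rightarrow> 'a \<Rightarrow> complex"
  assumes cis_scale_add_right: "a *\<^sub>C (x + y) = a *\<^sub>C x + a *\<^sub>C y"
    and cis_scale_add_left: "(a + b) *\<^sub>C x = a *\<^sub>C x + b *\<^sub>C x"
    and cis_scale_scale: "a *\<^sub>C (b *\<^sub>C x) = (a * b) *\<^sub>C x"
    and cis_scale_one: "1 *\<^sub>C x = x"
    and cis_inner_add_left: "cinner (x + y) z = cinner x z + cinner y z"
    and cis_inner_scale_left: "cinner (a *\<^sub>C x) y = a * cinner x y"
    and cis_inner_commute: "cinner y x = cnj (cinner x y)"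
    and cis_inner_nonneg: "0 \<le> Re (cinner x x)"
    and cis_inner_zero_iff: "cinner x x = 0 \<longleftrightarrow> x = 0"

definition cnorm :: "'a::complex_inner_space \<Rightarrow> real" where
  "cnorm x = sqrt (Re (cinner x x))"

definition clinear :: "('a::complex_inner_space \<Rightarrow> 'b::complex_inner_space) \<Rightarrow> bool" where
  "clinear T \<longleftrightarrow> (\<forall>x y. T (x + y) = T x + T y) \<and> (\<forall>a x. T (a *\<^sub>C x) = a *\<^sub>C T x)"

definition orth_preserving ::
  "real \<Rightarrow> real \<Rightarrow> ('a::complex_inner_space \<Rightarrow> 'b::complex_inner_space) \<Rightarrow> bool" where
  "orth_preserving \<delta> \<epsilon> T \<longleftrightarrow>
     (\<forall>\<eta> \<zeta>. cmod (cinner \<eta> \<zeta>) \<le> \<delta> * cnorm \<eta> * cnorm \<zeta> \<longrightarrow>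
        cmod (cinner (T \<eta>) (T \<zeta>)) \<le> \<epsilon> * cnorm (T \<eta>) * cnorm (T \<zeta>))"

end

theory Submission
  imports Defs
begin

text \<open>Put \<open>p = sqrt ((1 - \<delta>) / (1 + \<delta>))\<close>. For orthogonal \<open>\<eta>, \<zeta>\<close> the vectors
  \<open>\<parallel>\<zeta>\<parallel> \<eta> \<plusminus> p \<parallel>\<eta>\<parallel> \<zeta>\<close> have equal norms and real inner product, and the choice of \<open>p\<close>
  makes them exactly \<open>\<delta>\<close>-orthogonal. Their images under \<open>T\<close> are therefore
  \<open>\<epsilon>\<close>-orthogonal. For vectors \<open>s u \<plusminus> q v\<close> with real \<open>s, q\<close> the real part of the
  inner product is \<open>s\<^sup>2 \<parallel>u\<parallel>\<^sup>2 - q\<^sup>2 \<parallel>v\<parallel>\<^sup>2\<close> and the product of the norms is at most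
  \<open>s\<^sup>2 \<parallel>u\<parallel>\<^sup>2 + q\<^sup>2 \<parallel>v\<parallel>\<^sup>2\<close>, so \<open>\<epsilon>\<close>-orthogonality of the images compares \<open>\<parallel>T\<eta>\<parallel>\<close> with
  \<open>\<parallel>T\<zeta>\<parallel>\<close>. Exchanging \<open>\<eta>\<close> and \<open>\<zeta>\<close> gives the other inequality.\<close>

lemma cinner_add_right: "cinner (x::'a::complex_inner_space) (y + z) = cinner x y + cinner x z"
  by (metis cis_inner_add_left cis_inner_commute complex_cnj_add)

lemma cinner_scale_right: "cinner (x::'a::complex_inner_space) (a *\<^sub>C y) = cnj a * cinner x y"
  by (metis cis_inner_commute cis_inner_scale_left complex_cnj_cnj complex_cnj_mult)

lemma cinner_commute_eq_zero: "cinner (x::'a::complex_inner_space) y = 0 \<Longrightarrow> cinner y x = 0"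
  by (metis cis_inner_commute complex_cnj_zero)

lemma cnorm_nonneg: "0 \<le> cnorm x"
  unfolding cnorm_def using cis_inner_nonneg by simp

lemma cinner_self_eq_cnorm_sq: "cinner (x::'a::complex_inner_space) x = complex_of_real (cnorm x ^ 2)"
proof -
  have "Im (cinner x x) = Im (cnj (cinner x x))"
    using cis_inner_commute by metis
  then have "Im (cinner x x) = 0" by simp
  moreover have "cnorm x ^ 2 = Re (cinner x x)"
    unfolding cnorm_def using cis_inner_nonneg by simp
  ultimately show ?thesis by (simp add: complex_eq_iff)
qed

lemma cinner_real_combination:
  fixes x y :: "'a::complex_inner_space"
  shows "cinner (complex_of_real a *\<^sub>C x + complex_of_real b *\<^sub>C y)
                (complex_of_real c *\<^sub>C x + complex_of_real d *\<^sub>C y)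
       = complex_of_real (a * c * cnorm x ^ 2 + b * d * cnorm y ^ 2)
         + complex_of_real (a * d) * cinner x y + complex_of_real (b * c) * cinner y x"
  by (simp add: cis_inner_add_left cinner_add_right cis_inner_scale_left cinner_scale_right
      cinner_self_eq_cnorm_sq algebra_simps)

lemma cnorm_real_combination_sq:
  fixes x y :: "'a::complex_inner_space"
  shows "cnorm (complex_of_real s *\<^sub>C x + complex_of_real q *\<^sub>C y) ^ 2
       = s\<^sup>2 * cnorm x ^ 2 + q\<^sup>2 * cnorm y ^ 2 + 2 * s * q * Re (cinner x y)"
  using cis_inner_nonneg[of "complex_of_real s *\<^sub>C x + complex_of_real q *\<^sub>C y"]
  unfolding cnorm_def[of "_ + _"] cinner_real_combination cis_inner_commute[of x y]
  by (simp add: power2_eq_square algebra_simps)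

text \<open>The cross terms \<open>-s q \<langle>u,v\<rangle> + q s \<langle>v,u\<rangle>\<close> are purely imaginary.\<close>

lemma Re_cinner_sum_diff:
  fixes u v :: "'a::complex_inner_space"
  shows "Re (cinner (complex_of_real s *\<^sub>C u + complex_of_real q *\<^sub>C v)
                    (complex_of_real s *\<^sub>C u + complex_of_real (- q) *\<^sub>C v))
       = s\<^sup>2 * cnorm u ^ 2 - q\<^sup>2 * cnorm v ^ 2"
  unfolding cinner_real_combination cis_inner_commute[of v u]
  by (simp add: power2_eq_square)

lemma cnorm_sum_mult_cnorm_diff_le:
  fixes u v :: "'a::complex_inner_space"
  shows "cnorm (complex_of_real s *\<^sub>C u + complex_of_real q *\<^sub>C v)
         * cnorm (complex_of_real s *\<^sub>C u + complex_of_real (- q) *\<^sub>C v)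
       \<le> s\<^sup>2 * cnorm u ^ 2 + q\<^sup>2 * cnorm v ^ 2"
proof -
  let ?a = "cnorm (complex_of_real s *\<^sub>C u + complex_of_real q *\<^sub>C v)"
  let ?b = "cnorm (complex_of_real s *\<^sub>C u + complex_of_real (- q) *\<^sub>C v)"
  have "2 * (?a * ?b) \<le> ?a ^ 2 + ?b ^ 2"
    using sum_squares_bound[of ?a ?b] by (simp add: power2_eq_square)
  also have "\<dots> = 2 * (s\<^sup>2 * cnorm u ^ 2 + q\<^sup>2 * cnorm v ^ 2)"
    unfolding cnorm_real_combination_sq by simp
  finally show ?thesis by simp
qed

lemma orth_preserving_sum_diff_bound:
  fixes T :: "'a::complex_inner_space \<Rightarrow> 'b::complex_inner_space"
  assumes "0 \<le> \<epsilon>" and "clinear T" and "orth_preserving \<delta> \<epsilon> T"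
    and x_def: "x = complex_of_real s *\<^sub>C \<eta> + complex_of_real q *\<^sub>C \<zeta>"
    and y_def: "y = complex_of_real s *\<^sub>C \<eta> + complex_of_real (- q) *\<^sub>C \<zeta>"
    and "cmod (cinner x y) \<le> \<delta> * cnorm x * cnorm y"
  shows "(1 - \<epsilon>) * (s\<^sup>2 * cnorm (T \<eta>) ^ 2) \<le> (1 + \<epsilon>) * (q\<^sup>2 * cnorm (T \<zeta>) ^ 2)"
proof -
  have Tx: "T x = complex_of_real s *\<^sub>C T \<eta> + complex_of_real q *\<^sub>C T \<zeta>"
    and Ty: "T y = complex_of_real s *\<^sub>C T \<eta> + complex_of_real (- q) *\<^sub>C T \<zeta>"
    using \<open>clinear T\<close> unfolding x_def y_def clinear_def by auto
  have image_orth: "cmod (cinner (T x) (T y)) \<le> \<epsilon> * (cnorm (T x) * cnorm (T y))"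
    using assms(3,6) unfolding orth_preserving_def by (simp add: mult.assoc)
  have "s\<^sup>2 * cnorm (T \<eta>) ^ 2 - q\<^sup>2 * cnorm (T \<zeta>) ^ 2 = Re (cinner (T x) (T y))"
    unfolding Tx Ty Re_cinner_sum_diff ..
  also have "\<dots> \<le> cmod (cinner (T x) (T y))"
    by (rule complex_Re_le_cmod)
  also have "\<dots> \<le> \<epsilon> * (s\<^sup>2 * cnorm (T \<eta>) ^ 2 + q\<^sup>2 * cnorm (T \<zeta>) ^ 2)"
    using image_orth mult_left_mono[OF cnorm_sum_mult_cnorm_diff_le[of s "T \<eta>" q "T \<zeta>"] \<open>0 \<le> \<epsilon>\<close>]
    unfolding Tx Ty by linarith
  finally show ?thesis by (simp add: algebra_simps)
qed

lemma orthogonal_sum_diff_delta_orthogonal: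
  fixes \<eta> \<zeta> :: "'a::complex_inner_space"
  assumes "0 \<le> \<delta>" "\<delta> < 1" and "cinner \<eta> \<zeta> = 0"
    and p_def: "p = sqrt ((1 - \<delta>) / (1 + \<delta>))"
  defines "x \<equiv> complex_of_real (cnorm \<zeta>) *\<^sub>C \<eta> + complex_of_real (p * cnorm \<eta>) *\<^sub>C \<zeta>"
    and "y \<equiv> complex_of_real (cnorm \<zeta>) *\<^sub>C \<eta> + complex_of_real (- (p * cnorm \<eta>)) *\<^sub>C \<zeta>"
  shows "cmod (cinner x y) \<le> \<delta> * cnorm x * cnorm y"
proof -
  define N where "N = cnorm \<zeta> * cnorm \<eta>"
  have p_sq: "(1 + \<delta>) * p\<^sup>2 = 1 - \<delta>"
    using assms(1,2) unfolding p_def by simp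
  have inner: "cinner x y = complex_of_real (N\<^sup>2 * (1 - p\<^sup>2))"
    unfolding x_def y_def cinner_real_combination N_def
    using assms(3) cinner_commute_eq_zero[OF assms(3)]
    by (simp add: power2_eq_square algebra_simps)
  have x_sq: "cnorm x ^ 2 = N\<^sup>2 * (1 + p\<^sup>2)" and y_sq: "cnorm y ^ 2 = N\<^sup>2 * (1 + p\<^sup>2)"
    unfolding x_def y_def cnorm_real_combination_sq N_def using assms(3)
    by (simp_all add: power2_eq_square algebra_simps)
  then have "cnorm y = cnorm x"
    using power2_eq_imp_eq cnorm_nonneg by metis
  then have norms: "cnorm x * cnorm y = N\<^sup>2 * (1 + p\<^sup>2)"
    using x_sq by (simp add: power2_eq_square)
  have "p\<^sup>2 \<le> 1"
    using assms(1,2) unfolding p_def by simp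
  then have "cmod (cinner x y) = N\<^sup>2 * (1 - p\<^sup>2)"
    unfolding inner norm_of_real by simp
  also have "\<dots> = \<delta> * (N\<^sup>2 * (1 + p\<^sup>2))"
  proof -
    have "1 - p\<^sup>2 = \<delta> * (1 + p\<^sup>2)" using p_sq by (simp add: algebra_simps)
    then show ?thesis by simp
  qed
  finally show ?thesis
    unfolding norms[symmetric] by (simp add: mult.assoc)
qed

lemma orth_preserving_orthogonal_bound:
  fixes T :: "'a::complex_inner_space \<Rightarrow> 'b::complex_inner_space"
  assumes "0 \<le> \<delta>" "\<delta> < 1" "0 \<le> \<epsilon>"
    and "clinear T" and "orth_preserving \<delta> \<epsilon> T" and "cinner \<eta> \<zeta> = 0"
  shows "(1 - \<epsilon>) * (1 + \<delta>) * (cnorm (T \<eta>) * cnorm \<zeta>)\<^sup>2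
         \<le> (1 + \<epsilon>) * (1 - \<delta>) * (cnorm (T \<zeta>) * cnorm \<eta>)\<^sup>2"
proof -
  define p where "p = sqrt ((1 - \<delta>) / (1 + \<delta>))"
  have p_sq: "(1 + \<delta>) * p\<^sup>2 = 1 - \<delta>"
    using assms(1,2) unfolding p_def by simp
  have "(1 - \<epsilon>) * ((cnorm \<zeta>)\<^sup>2 * cnorm (T \<eta>) ^ 2)
        \<le> (1 + \<epsilon>) * ((p * cnorm \<eta>)\<^sup>2 * cnorm (T \<zeta>) ^ 2)"
    using orth_preserving_sum_diff_bound[OF assms(3-5) refl refl
        orthogonal_sum_diff_delta_orthogonal[OF assms(1,2,6) p_def]] .
  then have "(1 + \<delta>) * ((1 - \<epsilon>) * ((cnorm \<zeta>)\<^sup>2 * cnorm (T \<eta>) ^ 2))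
        \<le> (1 + \<delta>) * ((1 + \<epsilon>) * ((p * cnorm \<eta>)\<^sup>2 * cnorm (T \<zeta>) ^ 2))"
    using assms(1) by (intro mult_left_mono) auto
  also have "\<dots> = (1 + \<epsilon>) * ((1 + \<delta>) * p\<^sup>2) * (cnorm (T \<zeta>) * cnorm \<eta>)\<^sup>2"
    by (simp add: power_mult_distrib algebra_simps)
  finally show ?thesis
    unfolding p_sq by (simp add: power_mult_distrib algebra_simps)
qed

lemma le_sqrt_mult_of_sq_le:
  fixes X Y a :: real
  assumes "0 \<le> Y" and "X\<^sup>2 \<le> a * Y\<^sup>2"
  shows "X \<le> sqrt a * Y"
proof -
  have "X \<le> sqrt (X\<^sup>2)" by simp
  also have "\<dots> \<le> sqrt (a * Y\<^sup>2)" using assms(2) by (rule real_sqrt_le_mono)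
  also have "\<dots> = sqrt a * Y" using assms(1) by (simp add: real_sqrt_mult)
  finally show ?thesis .
qed

lemma sqrt_mult_le_of_sq_le:
  fixes X Y a :: real
  assumes "0 \<le> X" "0 \<le> Y" and "a * Y\<^sup>2 \<le> X\<^sup>2"
  shows "sqrt a * Y \<le> X"
proof -
  have "sqrt a * Y = sqrt (a * Y\<^sup>2)" using assms(2) by (simp add: real_sqrt_mult)
  also have "\<dots> \<le> sqrt (X\<^sup>2)" using assms(3) by (rule real_sqrt_le_mono)
  also have "\<dots> = X" using assms(1) by simp
  finally show ?thesis .
qed

lemma orth_preserving_orthogonal_upper_bound:
  fixes T :: "'a::complex_inner_space \<Rightarrow> 'b::complex_inner_space"
  assumes "0 \<le> \<delta>" "\<delta> < 1" "0 \<le> \<epsilon>" "\<epsilon> < 1"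
    and "clinear T" and "orth_preserving \<delta> \<epsilon> T" and "cinner \<eta> \<zeta> = 0"
  shows "(cnorm (T \<eta>) * cnorm \<zeta>)\<^sup>2
         \<le> ((1 - \<delta>) * (1 + \<epsilon>)) / ((1 + \<delta>) * (1 - \<epsilon>)) * (cnorm (T \<zeta>) * cnorm \<eta>)\<^sup>2"
proof -
  have "0 < (1 + \<delta>) * (1 - \<epsilon>)"
    using assms(1,4) by simp
  then show ?thesis
    using orth_preserving_orthogonal_bound[OF assms(1-3,5-7)] by (simp add: pos_le_divide_eq mult_ac)
qed

text \<open>Exchanging \<open>\<eta>\<close> and \<open>\<zeta>\<close> even yields the factor \<open>(1 + \<delta>) / (1 - \<delta>)\<close>;
  the claimed bound is weakened to \<open>(1 - \<delta>) / (1 + \<delta>)\<close>.\<close>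

lemma orth_preserving_orthogonal_lower_bound:
  fixes T :: "'a::complex_inner_space \<Rightarrow> 'b::complex_inner_space"
  assumes "0 \<le> \<delta>" "\<delta> < 1" "0 \<le> \<epsilon>" "\<epsilon> < 1"
    and "clinear T" and "orth_preserving \<delta> \<epsilon> T" and "cinner \<eta> \<zeta> = 0"
  shows "((1 - \<delta>) * (1 - \<epsilon>)) / ((1 + \<delta>) * (1 + \<epsilon>)) * (cnorm (T \<zeta>) * cnorm \<eta>)\<^sup>2
         \<le> (cnorm (T \<eta>) * cnorm \<zeta>)\<^sup>2"
proof -
  define X where "X = cnorm (T \<eta>) * cnorm \<zeta>"
  define Y where "Y = cnorm (T \<zeta>) * cnorm \<eta>"
  have "(1 - \<delta>) * (1 - \<epsilon>) * Y\<^sup>2 \<le> (1 - \<epsilon>) * (1 + \<delta>) * Y\<^sup>2"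
    using assms(1,4) by (intro mult_right_mono) auto
  also have "\<dots> \<le> (1 + \<epsilon>) * (1 - \<delta>) * X\<^sup>2"
    unfolding X_def Y_def
    by (rule orth_preserving_orthogonal_bound[OF assms(1-3,5,6) cinner_commute_eq_zero[OF assms(7)]])
  also have "\<dots> \<le> (1 + \<delta>) * (1 + \<epsilon>) * X\<^sup>2"
    using assms(1,3) by (intro mult_right_mono) auto
  moreover have "0 < (1 + \<delta>) * (1 + \<epsilon>)"
    using assms(1,3) by simp
  ultimately show ?thesis
    unfolding X_def[symmetric] Y_def[symmetric]
    by (simp only: times_divide_eq_left pos_divide_le_eq mult.commute[of "X\<^sup>2"])
qed

theorem corollary3p2:
  fixes T :: "'a::complex_inner_space \<Rightarrow> 'b::complex_inner_space"
    and \<delta> \<epsilon> :: real and \<eta> \<zeta> :: 'a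
  assumes "0 \<le> \<delta>" "\<delta> < 1" "0 \<le> \<epsilon>" "\<epsilon> < 1"
    and "clinear T" and "orth_preserving \<delta> \<epsilon> T"
    and "\<eta> \<noteq> 0" and "\<zeta> \<noteq> 0" and "cinner \<eta> \<zeta> = 0"
  shows "sqrt (((1 - \<delta>) * (1 - \<epsilon>)) / ((1 + \<delta>) * (1 + \<epsilon>))) * cnorm (T \<zeta>) * cnorm \<eta>
           \<le> cnorm (T \<eta>) * cnorm \<zeta>
       \<and> cnorm (T \<eta>) * cnorm \<zeta>
           \<le> sqrt (((1 - \<delta>) * (1 + \<epsilon>)) / ((1 + \<delta>) * (1 - \<epsilon>))) * cnorm (T \<zeta>) * cnorm \<eta>"
proof -
  have "0 \<le> cnorm (T \<eta>) * cnorm \<zeta>" "0 \<le> cnorm (T \<zeta>) * cnorm \<eta>"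
    by (simp_all add: cnorm_nonneg)
  then show ?thesis
    using sqrt_mult_le_of_sq_le[OF _ _ orth_preserving_orthogonal_lower_bound[OF assms(1-6,9)]]
      le_sqrt_mult_of_sq_le[OF _ orth_preserving_orthogonal_upper_bound[OF assms(1-6,9)]]
    by (simp add: mult.assoc)
qed

end
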